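(* Let $k\in\mathbb{N}$, let $P$ be the uniform distribution on $[0,1]$ and let $\beta=\{\frac jk:1\leq j\leq k\}$. Then the conditional optimal set of $k$-points for $P$ with respect to $\beta$ is $\beta$ itself, and the $k$th conditional quantization error is $V_k=\frac{k+3}{12k^3}$.
   Context: For a Borel probability measure $P$ on $\mathbb{R}$ and finite $\beta\subset\mathbb{R}$ with $\mathrm{card}(\beta)=r$, for $n\geq r$, $V_n=\inf\{\int\min_{a\in\alpha\cup\beta}(x-a)^2dP(x):\mathrm{card}(\alpha)\leq n-r\}$; a set $\alpha\cup\beta$ attaining the infimum (with each point of $\beta$ having a Voronoi region of positive $P$-measure) is a conditional optimal set of $n$-points with respect to $\beta$. *)

theory Defs
  imports "HOL-Probability.Probability"
begin

definition distortion :: "real measure \<Rightarrow> real set \<Rightarrow> real" where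
  "distortion M S = (\<integral>x. Min ((\<lambda>a. (x - a)^2) ` S) \<partial>M)"

definition cond_quant_error :: "real measure \<Rightarrow> real set \<Rightarrow> nat \<Rightarrow> real" where
  "cond_quant_error M \<beta> n =
     Inf {distortion M (\<alpha> \<union> \<beta>) | \<alpha>. finite \<alpha> \<and> card \<alpha> \<le> n - card \<beta>}"

definition voronoi :: "real set \<Rightarrow> real \<Rightarrow> real set" where
  "voronoi S b = {x. \<forall>c\<in>S. \<bar>x - b\<bar> \<le> \<bar>x - c\<bar>}"

definition cond_optimal_set :: "real measure \<Rightarrow> real set \<Rightarrow> nat \<Rightarrow> real set \<Rightarrow> bool" where
  "cond_optimal_set M \<beta> n \<gamma> \<longleftrightarrow>
     (\<exists>\<alpha>. finite \<alpha> \<and> card \<alpha> \<le> n - card \<beta> \<and> \<gamma> = \<alpha> \<union> \<beta> \<and>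
          distortion M \<gamma> = cond_quant_error M \<beta> n \<and>
          (\<forall>b\<in>\<beta>. measure M (voronoi \<gamma> b) > 0))"

end

theory Submission
  imports Defs
begin

text \<open>Since \<open>\<beta>\<close> already has \<open>k\<close> points, the only admissible extension is
  \<open>\<alpha> = {}\<close>, so \<open>V\<^sub>k\<close> is the distortion of \<open>\<beta>\<close> itself and optimality reduces
  to the Voronoi condition. On \<open>[0, 1/k]\<close> the nearest point is \<open>1/k\<close>, contributing
  \<open>1/(3k\<^sup>3)\<close>; each of the \<open>k - 1\<close> cells \<open>[j/k, (j+1)/k]\<close> contributes
  \<open>1/(12k\<^sup>3)\<close>, giving \<open>(k+3)/(12k\<^sup>3)\<close>. Every Voronoi region of \<open>j/k\<close> contains
  \<open>[j/k - 1/(2k), j/k]\<close>, of positive measure.\<close>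

definition min_sq_dist :: "real set \<Rightarrow> real \<Rightarrow> real" where
  "min_sq_dist S x = Min ((\<lambda>a. (x - a)^2) ` S)"

definition grid :: "nat \<Rightarrow> real set" where
  "grid k = (\<lambda>j. real j / real k) ` {1..k}"

lemma distortion_eq_integral_min_sq_dist: "distortion M S = integral\<^sup>L M (min_sq_dist S)"
  unfolding distortion_def min_sq_dist_def ..

lemma min_sq_dist_nonneg: "finite S \<Longrightarrow> S \<noteq> {} \<Longrightarrow> 0 \<le> min_sq_dist S x"
  unfolding min_sq_dist_def by (simp add: Min_ge_iff)

lemma borel_measurable_min_sq_dist: "finite S \<Longrightarrow> min_sq_dist S \<in> borel_measurable borel"
  unfolding min_sq_dist_def by measurable

lemma min_sq_dist_voronoi:
  assumes "finite S" "b \<in> S" "x \<in> voronoi S b"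
  shows "min_sq_dist S x = (x - b)^2"
  unfolding min_sq_dist_def
proof (rule Min_eqI)
  fix y assume "y \<in> (\<lambda>a. (x - a)^2) ` S"
  then obtain c where "c \<in> S" "y = (x - c)^2" by auto
  with assms(3) show "(x - b)^2 \<le> y"
    unfolding voronoi_def by (simp add: abs_le_square_iff)
qed (use assms in auto)

lemma closed_voronoi: "closed (voronoi S b)"
proof -
  have "voronoi S b = (\<Inter>c\<in>S. {x. \<bar>x - b\<bar> \<le> \<bar>x - c\<bar>})"
    unfolding voronoi_def by auto
  then show ?thesis
    by (simp add: closed_INT closed_Collect_le continuous_intros)
qed

lemma integral_uniform_measure_Icc:
  fixes f :: "real \<Rightarrow> real"
  assumes "a < b" "f \<in> borel_measurable borel" "\<And>x. 0 \<le> f x"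
    and "(f has_integral I) {a..b}"
  shows "integral\<^sup>L (uniform_measure lborel {a..b}) f = I / (b - a)"
proof -
  have f_abs: "f absolutely_integrable_on {a..b}"
    using assms(3,4) by (intro nonnegative_absolutely_integrable_1 has_integral_integrable) auto
  have "uniform_measure lborel {a..b} = density lborel (\<lambda>x. ennreal (indicator {a..b} x / (b - a)))"
    using assms(1) unfolding uniform_measure_def
    by (simp add: divide_ennreal ennreal_indicator[symmetric])
  then have "integral\<^sup>L (uniform_measure lborel {a..b}) f
      = integral\<^sup>L lborel (\<lambda>x. (indicator {a..b} x / (b - a)) *\<^sub>R f x)"
    using assms(1,2) by (simp add: integral_density)
  also have "\<dots> = (LINT x:{a..b}|lebesgue. f x) / (b - a)"
    using assms(2)
    by (simp add: integral_completion[symmetric] set_lebesgue_integral_def)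
  also have "\<dots> = I / (b - a)"
    using has_integral_unique[OF has_integral_set_lebesgue[OF f_abs] assms(4)] by simp
  finally show ?thesis .
qed

lemma cond_quant_error_card_eq:
  assumes "finite \<beta>" "card \<beta> = n"
  shows "cond_quant_error M \<beta> n = distortion M \<beta>"
proof -
  have "{distortion M (\<alpha> \<union> \<beta>) | \<alpha>. finite \<alpha> \<and> card \<alpha> \<le> n - card \<beta>} = {distortion M \<beta>}"
    using assms by (auto intro!: exI[of _ "{}"])
  then show ?thesis
    unfolding cond_quant_error_def by simp
qed

lemma cond_optimal_set_card_eq_iff:
  assumes "finite \<beta>" "card \<beta> = n"
  shows "cond_optimal_set M \<beta> n \<gamma> \<longleftrightarrow> \<gamma> = \<beta> \<and> (\<forall>b\<in>\<beta>. measure M (voronoi \<beta> b) > 0)"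
  using assms unfolding cond_optimal_set_def cond_quant_error_card_eq[OF assms] by auto

lemma finite_grid: "finite (grid k)"
  unfolding grid_def by simp

lemma grid_memI: "j \<in> {1..k} \<Longrightarrow> real j / real k \<in> grid k"
  unfolding grid_def by simp

lemma card_grid: "card (grid k) = k"
proof (cases "k = 0")
  case False
  then have "inj_on (\<lambda>j. real j / real k) {1..k}"
    by (auto simp: inj_on_def)
  then show ?thesis
    unfolding grid_def by (simp add: card_image)
qed (simp add: grid_def)

lemma grid_nonempty: "k > 0 \<Longrightarrow> grid k \<noteq> {}"
  unfolding grid_def by auto

lemma mem_voronoi_grid:
  fixes x :: real and j k :: nat
  assumes "k > 0" and closest: "\<And>i. i \<in> {1..k} \<Longrightarrow> \<bar>x * k - j\<bar> \<le> \<bar>x * k - i\<bar>"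
  shows "x \<in> voronoi (grid k) (real j / real k)"
  unfolding voronoi_def grid_def
proof clarify
  fix i :: nat
  assume "i \<in> {1..k}"
  have "\<bar>x - real j / k\<bar> = \<bar>x * k - j\<bar> / k" "\<bar>x - real i / k\<bar> = \<bar>x * k - i\<bar> / k"
    using assms(1) by (simp_all add: abs_divide field_simps)
  with closest[of i] \<open>i \<in> {1..k}\<close> show "\<bar>x - real j / k\<bar> \<le> \<bar>x - real i / k\<bar>"
    by (simp add: divide_right_mono)
qed

lemma mem_voronoi_grid_near:
  fixes x :: real and j k :: nat
  assumes "k > 0" "\<bar>x * k - j\<bar> \<le> 1/2"
  shows "x \<in> voronoi (grid k) (real j / real k)"
proof (rule mem_voronoi_grid[OF assms(1)])
  fix i :: nat
  show "\<bar>x * k - j\<bar> \<le> \<bar>x * k - i\<bar>"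
  proof (cases "i = j")
    case False
    then have "\<bar>real i - real j\<bar> \<ge> 1" by linarith
    with assms(2) show ?thesis by linarith
  qed simp
qed

lemma mem_voronoi_grid_first:
  fixes x :: real and k :: nat
  assumes "k > 0" "0 \<le> x" "x \<le> 1 / k"
  shows "x \<in> voronoi (grid k) (1 / k)"
  using mem_voronoi_grid[OF assms(1), of x 1] assms(1-3)
  by (simp add: field_simps)

lemma has_integral_power2_diff:
  fixes a b c :: real
  assumes "a \<le> b"
  shows "((\<lambda>x. (x - c)^2) has_integral ((b - c)^3 - (a - c)^3) / 3) {a..b}"
proof -
  have "((\<lambda>x. (x - c)^3 / 3) has_vector_derivative (x - c)^2) (at x within {a..b})" for x
    unfolding has_real_derivative_iff_has_vector_derivative[symmetric]
    by (auto intro!: derivative_eq_intros simp: power2_eq_square)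
  from fundamental_theorem_of_calculus[OF assms this] show ?thesis
    by (simp add: diff_divide_distrib)
qed

lemma has_integral_min_sq_dist_grid_near:
  fixes u v :: real and j k :: nat
  assumes "j \<in> {1..k}" "u \<le> v" "j - 1/2 \<le> u * k" "v * k \<le> j + 1/2"
  shows "(min_sq_dist (grid k) has_integral ((v - j / k)^3 - (u - j / k)^3) / 3) {u..v}"
proof (rule has_integral_eq[OF _ has_integral_power2_diff[OF assms(2)]])
  fix x assume "x \<in> {u..v}"
  then have "u * k \<le> x * k" "x * k \<le> v * k"
    by (auto intro: mult_right_mono)
  with assms(3,4) have "\<bar>x * k - j\<bar> \<le> 1/2"
    by linarith
  then show "(x - j / k)^2 = min_sq_dist (grid k) x"
    using assms(1) by (auto intro!: min_sq_dist_voronoi[symmetric] mem_voronoi_grid_near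
      finite_grid grid_memI)
qed

lemma has_integral_min_sq_dist_grid_first:
  fixes k :: nat
  assumes "k > 0"
  shows "(min_sq_dist (grid k) has_integral 1 / (3 * real k ^ 3)) {0..1 / real k}"
proof -
  have "(min_sq_dist (grid k) has_integral ((1/k - 1/k)^3 - (0 - 1/k)^3) / 3) {0..1/k}"
  proof (rule has_integral_eq[OF _ has_integral_power2_diff])
    fix x assume "x \<in> {0..1 / real k}"
    then show "(x - 1 / real k)^2 = min_sq_dist (grid k) x"
      using assms grid_memI[of 1 k]
      by (auto intro!: min_sq_dist_voronoi[symmetric] mem_voronoi_grid_first finite_grid)
  qed simp
  then show ?thesis
    by (simp add: power_divide mult.commute)
qed

lemma has_integral_min_sq_dist_grid_cell:
  fixes j k :: nat
  assumes "1 \<le> j" "j < k"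
  shows "(min_sq_dist (grid k) has_integral 1 / (12 * real k ^ 3))
    {real j / real k..(real j + 1) / real k}"
proof -
  define c where "c = (2 * real j + 1) / (2 * real k)"
  have k: "real k > 0" using assms by simp
  have left: "(min_sq_dist (grid k) has_integral ((c - j/k)^3 - (j/k - j/k)^3) / 3) {j/k..c}"
    using assms k
    by (intro has_integral_min_sq_dist_grid_near) (auto simp: c_def field_simps)
  have right: "(min_sq_dist (grid k) has_integral
      (((j+1)/k - (j+1)/k)^3 - (c - (j+1)/k)^3) / 3) {c..(j+1)/k}"
    using has_integral_min_sq_dist_grid_near[of "j+1" k c "(j+1)/k"] assms k
    by (auto simp: c_def field_simps)
  have "c - j/k = 1 / (2 * k)" "c - (j+1)/k = - (1 / (2 * k))"
    using k by (auto simp: c_def field_simps)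
  then have "(min_sq_dist (grid k) has_integral 1 / (24 * k^3) + 1 / (24 * k^3)) {j/k..(j+1)/k}"
    using has_integral_combine[OF _ _ left right] k
    by (simp add: power_divide c_def field_simps)
  then show ?thesis
    by (simp add: add_divide_distrib[symmetric] add.commute)
qed

lemma has_integral_min_sq_dist_grid_upto:
  fixes m k :: nat
  assumes "1 \<le> m" "m \<le> k"
  shows "(min_sq_dist (grid k) has_integral (real m + 3) / (12 * real k ^ 3)) {0..real m / real k}"
  using assms(1,2)
proof (induction m rule: dec_induct)
  case base
  then show ?case
    using has_integral_min_sq_dist_grid_first[of k] by (simp add: field_simps)
next
  case (step n)
  have "(min_sq_dist (grid k) has_integral (real n + 3) / (12 * real k ^ 3) + 1 / (12 * real k ^ 3))
      {0..(real n + 1) / real k}"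
    using step has_integral_min_sq_dist_grid_cell[of n k]
    by (intro has_integral_combine[of 0 "real n / real k"]) (auto simp: divide_right_mono)
  then show ?case
    by (simp add: add_divide_distrib[symmetric] add_ac)
qed

lemma distortion_uniform_grid:
  fixes k :: nat
  assumes "k > 0"
  shows "distortion (uniform_measure lborel {0..1}) (grid k) = (real k + 3) / (12 * real k ^ 3)"
  unfolding distortion_eq_integral_min_sq_dist
  using integral_uniform_measure_Icc[of 0 1, OF _ borel_measurable_min_sq_dist[OF finite_grid]
      min_sq_dist_nonneg[OF finite_grid grid_nonempty[OF assms]]]
    has_integral_min_sq_dist_grid_upto[of k k] assms
  by simp

lemma measure_uniform_voronoi_grid_pos:
  fixes k :: nat
  assumes "k > 0" "b \<in> grid k"
  shows "measure (uniform_measure lborel {0..1}) (voronoi (grid k) b) > 0"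
proof -
  let ?P = "uniform_measure lborel {0..1::real}"
  interpret P: prob_space ?P
    by (rule prob_space_uniform_measure) auto
  obtain j where j: "j \<in> {1..k}" "b = real j / real k"
    using assms(2) unfolding grid_def by auto
  define I where "I = {b - 1 / (2 * k) .. b}"
  have "I \<subseteq> voronoi (grid k) b"
    unfolding I_def j(2) using assms(1)
    by (auto intro!: mem_voronoi_grid_near simp: field_simps)
  moreover have "voronoi (grid k) b \<in> sets ?P"
    using closed_voronoi by simp
  ultimately have "measure ?P I \<le> measure ?P (voronoi (grid k) b)"
    unfolding I_def by (intro P.finite_measure_mono) auto
  moreover have "I \<subseteq> {0..1}"
    unfolding I_def j(2) using j(1) assms(1) by (auto simp: field_simps)
  then have "measure ?P I = 1 / (2 * k)"
    unfolding I_def using assms(1) by (simp add: Int_absorb1)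
  moreover have "1 / (2 * k) > 0"
    using assms(1) by simp
  ultimately show ?thesis
    by linarith
qed

theorem proposition4p1:
  fixes k :: nat
  assumes "k \<ge> 1"
  defines "P \<equiv> uniform_measure lborel {0..(1::real)}"
      and "\<beta> \<equiv> {real j / real k | j. 1 \<le> j \<and> j \<le> k}"
  shows "(\<forall>\<gamma>. cond_optimal_set P \<beta> k \<gamma> \<longleftrightarrow> \<gamma> = \<beta>)
         \<and> cond_quant_error P \<beta> k = (real k + 3) / (12 * real k ^ 3)"
proof -
  have k: "k > 0" using assms(1) by simp
  have \<beta>: "\<beta> = grid k"
    unfolding \<beta>_def grid_def by auto
  show ?thesis
    unfolding \<beta> P_def
    using cond_optimal_set_card_eq_iff[OF finite_grid card_grid]
      cond_quant_error_card_eq[OF finite_grid card_grid]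
      measure_uniform_voronoi_grid_pos[OF k] distortion_uniform_grid[OF k]
    by simp
qed

end
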